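(* Every CUNC ring is an NCUC ring.
   Context: All rings are associative with identity $1$. For a ring $R$, $\mathrm{Id}(R)$, $U(R)$, $\mathrm{Nil}(R)$ denote the sets of idempotents, units and nilpotent elements. An element $a\in R$ is clean if $a=e+u$ for some $e\in\mathrm{Id}(R)$, $u\in U(R)$, and uniquely clean if there is exactly one $e\in \mathrm{Id}(R)$ with $a-e\in U(R)$. An element $a$ is nil-clean if $a=e+q$ with $e\in \mathrm{Id}(R)$, $q\in\mathrm{Nil}(R)$, and uniquely nil-clean if there is exactly one $e\in\mathrm{Id}(R)$ with $a-e\in\mathrm{Nil}(R)$. $R$ is CUNC if every clean element of $R$ is uniquely nil-clean, and NCUC if every nil-clean element of $R$ is uniquely clean. *)

theory Defs
  imports Main
begin

definition idempotents :: "'a::ring_1 set" where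
  "idempotents = {e. e * e = e}"

definition units_of_ring :: "'a::ring_1 set" where
  "units_of_ring = {u. \<exists>v. u * v = 1 \<and> v * u = 1}"

definition nilpotents :: "'a::ring_1 set" where
  "nilpotents = {q. \<exists>n::nat. q ^ n = 0}"

definition clean :: "'a::ring_1 \<Rightarrow> bool" where
  "clean a \<longleftrightarrow> (\<exists>e u. e \<in> idempotents \<and> u \<in> units_of_ring \<and> a = e + u)"

definition uniquely_clean :: "'a::ring_1 \<Rightarrow> bool" where
  "uniquely_clean a \<longleftrightarrow> (\<exists>!e. e \<in> idempotents \<and> a - e \<in> units_of_ring)"

definition nil_clean :: "'a::ring_1 \<Rightarrow> bool" where
  "nil_clean a \<longleftrightarrow> (\<exists>e q. e \<in> idempotents \<and> q \<in> nilpotents \<and> a = e + q)"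

definition uniquely_nil_clean :: "'a::ring_1 \<Rightarrow> bool" where
  "uniquely_nil_clean a \<longleftrightarrow> (\<exists>!e. e \<in> idempotents \<and> a - e \<in> nilpotents)"

definition CUNC :: "'a::ring_1 itself \<Rightarrow> bool" where
  "CUNC _ \<longleftrightarrow> (\<forall>a::'a. clean a \<longrightarrow> uniquely_nil_clean a)"

definition NCUC :: "'a::ring_1 itself \<Rightarrow> bool" where
  "NCUC _ \<longleftrightarrow> (\<forall>a::'a. nil_clean a \<longrightarrow> uniquely_clean a)"

end

theory Submission
  imports Defs
begin

text \<open>
  In a CUNC ring, uniqueness of nil-clean decompositions forces every idempotent \<open>e\<close> to be
  central: for any \<open>r\<close>, the square-zero corner \<open>x = e r (1 - e)\<close> makes \<open>e + x\<close> an idempotent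
  with \<open>e - (e + x)\<close> nilpotent, so \<open>x = 0\<close> (and symmetrically for \<open>(1 - e) r e\<close>).
  A unit \<open>u = e + q\<close> then has \<open>(1 - e) u\<close> nilpotent, whence \<open>e = 1\<close>: units are unipotent,
  and in particular \<open>-2 = -1 - 1\<close> is nilpotent. With \<open>2\<close> nilpotent and idempotents central,
  \<open>a - e\<close> is nilpotent iff \<open>a - (1 - e)\<close> is a unit, so \<open>e \<mapsto> 1 - e\<close> matches nil-clean
  with clean decompositions and uniqueness transfers.
\<close>

definition central :: "'a::ring_1 \<Rightarrow> bool" where
  "central c \<longleftrightarrow> (\<forall>z. c * z = z * c)"

lemma central_one_minus: "central e \<Longrightarrow> central (1 - e)"
  by (simp add: central_def algebra_simps)

lemma central_minus_one: "central e \<Longrightarrow> central (e - 1)"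
  by (simp add: central_def algebra_simps)

lemma central_two: "central (2::'a::ring_1)"
  by (simp add: central_def mult_2 mult_2_right)

lemma central_mult:
  assumes "central c" and "central d"
  shows "central (c * d)"
  unfolding central_def
proof
  fix z
  have "c * d * z = c * (z * d)"
    using assms(2) by (simp add: central_def mult.assoc)
  also have "\<dots> = c * z * d"
    by (simp only: mult.assoc)
  also have "\<dots> = z * (c * d)"
    using assms(1) by (simp only: central_def mult.assoc)
  finally show "c * d * z = z * (c * d)" .
qed

lemma power_mult_central:
  fixes c t :: "'a::ring_1"
  assumes "central c"
  shows "(c * t) ^ k = c ^ k * t ^ k"
proof (induction k)
  case 0
  show ?case by simp
next
  case (Suc k)
  have "(c * t) ^ Suc k = c ^ k * t ^ k * (c * t)"
    by (simp only: power_Suc2 Suc)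
  also have "\<dots> = c ^ k * (t ^ k * c) * t"
    by (simp only: mult.assoc)
  also have "\<dots> = c ^ k * (c * t ^ k) * t"
    using assms by (simp only: central_def)
  also have "\<dots> = c ^ Suc k * t ^ Suc k"
    by (simp only: power_Suc2 mult.assoc)
  finally show ?case .
qed

lemma idempotent_one_minus: "e \<in> idempotents \<Longrightarrow> 1 - e \<in> idempotents"
  by (simp add: idempotents_def algebra_simps)

lemma idempotent_add:
  fixes e x :: "'a::ring_1"
  assumes "e \<in> idempotents" and "e * x + x * e = x" and "x * x = 0"
  shows "e + x \<in> idempotents"
  using assms by (simp add: idempotents_def algebra_simps)

lemma idempotent_clean:
  assumes "e \<in> idempotents"
  shows "clean e"
proof -
  have "(2 * e - 1) * (2 * e - 1) = 1"
    using assms by (simp add: idempotents_def algebra_simps mult_2 mult_2_right)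
  then have "2 * e - 1 \<in> units_of_ring"
    unfolding units_of_ring_def by blast
  moreover have "e = (1 - e) + (2 * e - 1)"
    by (simp add: algebra_simps mult_2)
  ultimately show ?thesis
    using idempotent_one_minus[OF assms] unfolding clean_def by blast
qed

lemma unit_clean: "u \<in> units_of_ring \<Longrightarrow> clean u"
  unfolding clean_def idempotents_def by (rule exI[of _ 0]) simp

lemma unit_power:
  fixes u :: "'a::ring_1"
  assumes "u \<in> units_of_ring"
  shows "u ^ k \<in> units_of_ring"
proof -
  obtain v where uv: "u * v = 1" "v * u = 1"
    using assms unfolding units_of_ring_def by blast
  have "u ^ k * v ^ k = 1 \<and> v ^ k * u ^ k = 1"
  proof (induction k)
    case (Suc k)
    have "u ^ Suc k * v ^ Suc k = u * (u ^ k * v ^ k) * v"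
      by (simp only: power_Suc[of u] power_Suc2[of v] mult.assoc)
    moreover have "v ^ Suc k * u ^ Suc k = v * (v ^ k * u ^ k) * u"
      by (simp only: power_Suc[of v] power_Suc2[of u] mult.assoc)
    ultimately show ?case using Suc uv by simp
  qed simp
  then show ?thesis unfolding units_of_ring_def by blast
qed

lemma zero_nilpotent: "0 \<in> nilpotents"
  unfolding nilpotents_def using power_one_right[of 0] by blast

lemma square_zero_nilpotent: "x * x = 0 \<Longrightarrow> x \<in> nilpotents"
  unfolding nilpotents_def by (auto simp: power2_eq_square intro: exI[of _ 2])

lemma nilpotent_uminus:
  fixes x :: "'a::ring_1"
  assumes "x \<in> nilpotents"
  shows "- x \<in> nilpotents"
proof -
  obtain n where "x ^ n = 0"
    using assms unfolding nilpotents_def by blast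
  then have "(- x) ^ n = 0"
    by (simp only: power_minus[of x] mult_zero_right)
  then show ?thesis unfolding nilpotents_def by blast
qed

lemma nilpotent_mult_central:
  fixes c t :: "'a::ring_1"
  assumes "central c" and "c \<in> nilpotents \<or> t \<in> nilpotents"
  shows "c * t \<in> nilpotents"
proof -
  obtain n where "c ^ n = 0 \<or> t ^ n = 0"
    using assms(2) unfolding nilpotents_def by blast
  then have "(c * t) ^ n = 0"
    by (auto simp: power_mult_central[OF assms(1)])
  then show ?thesis unfolding nilpotents_def by blast
qed

lemma power_add_central:
  fixes x c :: "'a::ring_1"
  assumes "central c"
  shows "\<exists>t. (x + c) ^ n = x ^ n + c * t"
proof (induction n)
  case 0
  show ?case by (rule exI[of _ 0]) simp
next
  case (Suc n)
  then obtain t where t: "(x + c) ^ n = x ^ n + c * t" by blast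
  have "(x + c) ^ Suc n = (x ^ n + c * t) * (x + c)"
    by (simp only: power_Suc2 t)
  also have "\<dots> = x ^ Suc n + c * (x ^ n + t * (x + c))"
    using assms[unfolded central_def, rule_format, of "x ^ n"]
    by (simp add: distrib_left distrib_right power_Suc2 mult.assoc add.assoc del: power_Suc)
  finally show ?case by blast
qed

lemma nilpotent_add_central:
  fixes x c :: "'a::ring_1"
  assumes "central c" and "x \<in> nilpotents" and "c \<in> nilpotents"
  shows "x + c \<in> nilpotents"
proof -
  obtain m k where m: "x ^ m = 0" and k: "c ^ k = 0"
    using assms(2,3) unfolding nilpotents_def by blast
  obtain t where t: "(x + c) ^ m = x ^ m + c * t"
    using power_add_central[OF assms(1)] by blast
  have "(x + c) ^ (m * k) = (c * t) ^ k"
    by (simp add: power_mult t m)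
  also have "\<dots> = 0"
    by (simp add: power_mult_central[OF assms(1)] k)
  finally show ?thesis unfolding nilpotents_def by blast
qed

lemma one_minus_mult_geometric_sum:
  fixes x :: "'a::ring_1"
  shows "(1 - x) * (\<Sum>i<n. x ^ i) = 1 - x ^ n \<and> (\<Sum>i<n. x ^ i) * (1 - x) = 1 - x ^ n"
proof (induction n)
  case (Suc n)
  have "(1 - x) * (\<Sum>i<Suc n. x ^ i) = (1 - x ^ n) + (1 - x) * x ^ n"
    using Suc by (simp add: distrib_left)
  also have "\<dots> = 1 - x ^ Suc n"
    by (simp add: algebra_simps)
  moreover have "(\<Sum>i<Suc n. x ^ i) * (1 - x) = (1 - x ^ n) + x ^ n * (1 - x)"
    using Suc by (simp add: distrib_right)
  moreover have "\<dots> = 1 - x ^ Suc n"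
    by (simp add: algebra_simps power_Suc2 del: power_Suc)
  ultimately show ?case by simp
qed simp

lemma one_add_nilpotent_unit:
  fixes q :: "'a::ring_1"
  assumes "q \<in> nilpotents"
  shows "1 + q \<in> units_of_ring"
proof -
  obtain k where "(- q) ^ k = 0"
    using nilpotent_uminus[OF assms] unfolding nilpotents_def by blast
  then show ?thesis
    using one_minus_mult_geometric_sum[of "- q" k] unfolding units_of_ring_def by auto
qed

lemma nilpotent_idempotent_eq_zero:
  fixes e :: "'a::ring_1"
  assumes "e \<in> idempotents" and "e \<in> nilpotents"
  shows "e = 0"
proof -
  obtain k where k: "e ^ k = 0"
    using assms(2) unfolding nilpotents_def by blast
  have power_Suc_idem: "e ^ Suc n = e" for n
    using assms(1) by (induction n) (simp_all add: idempotents_def power_Suc2 mult.assoc)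
  show ?thesis
  proof (cases k)
    case 0
    then have "(1::'a) = 0"
      using k by simp
    then show ?thesis
      by (metis mult_1 mult_zero_left)
  next
    case (Suc n)
    then show ?thesis
      using k power_Suc_idem by simp
  qed
qed

lemma central_mult_unit_nilpotent:
  fixes c u :: "'a::ring_1"
  assumes "central c" and "u \<in> units_of_ring" and "c * u \<in> nilpotents"
  shows "c \<in> nilpotents"
proof -
  obtain k where "(c * u) ^ k = 0"
    using assms(3) unfolding nilpotents_def by blast
  then have cu: "c ^ k * u ^ k = 0"
    by (simp add: power_mult_central[OF assms(1)])
  obtain v where "u ^ k * v = 1"
    using unit_power[OF assms(2)] unfolding units_of_ring_def by blast
  then have "c ^ k = c ^ k * u ^ k * v"
    by (simp add: mult.assoc)
  with cu show ?thesis
    unfolding nilpotents_def by auto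
qed

lemma nilpotent_add_two_mult_central:
  fixes x f :: "'a::ring_1"
  assumes "(2::'a) \<in> nilpotents" and "central f" and "x \<in> nilpotents"
  shows "x + 2 * f \<in> nilpotents"
proof -
  have "2 * f \<in> nilpotents"
    using assms(1) by (intro nilpotent_mult_central central_two disjI1)
  then show ?thesis
    by (rule nilpotent_add_central[OF central_mult[OF central_two assms(2)] assms(3)])
qed

lemma uniquely_nil_clean_idempotent_central:
  fixes e :: "'a::ring_1"
  assumes e: "e \<in> idempotents" and unique: "uniquely_nil_clean e"
  shows "central e"
proof -
  have ee: "e * e = e" and ee2: "e * (e * z) = e * z" for z
    using e by (simp_all add: idempotents_def flip: mult.assoc)
  have rigid: "x = 0" if "e * x + x * e = x" and "x * x = 0" for x
  proof -
    have "e + x \<in> idempotents"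
      using idempotent_add[OF e that] .
    moreover have "e - (e + x) \<in> nilpotents"
      using nilpotent_uminus[OF square_zero_nilpotent[OF that(2)]] by simp
    moreover have "e - e \<in> nilpotents"
      using zero_nilpotent by simp
    ultimately have "e + x = e"
      using e unique unfolding uniquely_nil_clean_def by blast
    then show ?thesis by simp
  qed
  have "e * r = r * e" for r
  proof -
    have "e * r * (1 - e) = 0"
      by (rule rigid) (simp_all add: algebra_simps ee ee2)
    moreover have "(1 - e) * r * e = 0"
      by (rule rigid) (simp_all add: algebra_simps ee ee2)
    ultimately show ?thesis
      by (simp add: algebra_simps ee ee2)
  qed
  then show ?thesis unfolding central_def by blast
qed

lemma unit_minus_central_idempotent_nilpotent:
  fixes u e :: "'a::ring_1"
  assumes "u \<in> units_of_ring" and "e \<in> idempotents" and "central e" and "u - e \<in> nilpotents"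
  shows "e = 1"
proof -
  have c: "central (1 - e)"
    using assms(3) by (rule central_one_minus)
  have "(1 - e) * u = (1 - e) * (u - e)"
    using assms(2) by (simp add: idempotents_def algebra_simps)
  also have "\<dots> \<in> nilpotents"
    using nilpotent_mult_central[OF c] assms(4) by blast
  finally have "1 - e \<in> nilpotents"
    by (rule central_mult_unit_nilpotent[OF c assms(1)])
  then have "1 - e = 0"
    using nilpotent_idempotent_eq_zero idempotent_one_minus[OF assms(2)] by blast
  then show ?thesis by simp
qed

lemma CUNC_idempotent_central:
  assumes "CUNC TYPE('a::ring_1)" and "(e::'a) \<in> idempotents"
  shows "central e"
  using assms idempotent_clean uniquely_nil_clean_idempotent_central unfolding CUNC_def by blast

lemma CUNC_unit_unipotent:
  assumes "CUNC TYPE('a::ring_1)" and "(u::'a) \<in> units_of_ring"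
  shows "u - 1 \<in> nilpotents"
proof -
  obtain e where e: "e \<in> idempotents" "u - e \<in> nilpotents"
    using assms unit_clean unfolding CUNC_def uniquely_nil_clean_def by blast
  moreover have "e = 1"
    using unit_minus_central_idempotent_nilpotent CUNC_idempotent_central assms e by blast
  ultimately show ?thesis by simp
qed

lemma CUNC_two_nilpotent:
  assumes "CUNC TYPE('a::ring_1)"
  shows "(2::'a) \<in> nilpotents"
proof -
  have "(- 1::'a) * (- 1) = 1"
    by simp
  then have "(- 1::'a) \<in> units_of_ring"
    unfolding units_of_ring_def by blast
  then have "- 1 - 1 \<in> (nilpotents :: 'a set)"
    by (rule CUNC_unit_unipotent[OF assms])
  then have "- (- 1 - 1) \<in> (nilpotents :: 'a set)"
    by (rule nilpotent_uminus)
  then show ?thesis by simp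
qed

lemma CUNC_nilpotent_shift_unit:
  assumes "CUNC TYPE('a::ring_1)" and "(e::'a) \<in> idempotents" and "a - e \<in> nilpotents"
  shows "a - (1 - e) \<in> units_of_ring"
proof -
  have "(a - e) + 2 * (e - 1) \<in> nilpotents"
    using nilpotent_add_two_mult_central CUNC_two_nilpotent central_minus_one
      CUNC_idempotent_central assms by blast
  then have "1 + ((a - e) + 2 * (e - 1)) \<in> units_of_ring"
    by (rule one_add_nilpotent_unit)
  also have "1 + ((a - e) + 2 * (e - 1)) = a - (1 - e)"
    by (simp add: algebra_simps mult_2)
  finally show ?thesis .
qed

lemma CUNC_unit_shift_nilpotent:
  assumes "CUNC TYPE('a::ring_1)" and "(f::'a) \<in> idempotents" and "a - f \<in> units_of_ring"
  shows "a - (1 - f) \<in> nilpotents"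
proof -
  have "(a - f - 1) + 2 * f \<in> nilpotents"
    using nilpotent_add_two_mult_central CUNC_two_nilpotent CUNC_unit_unipotent
      CUNC_idempotent_central assms by blast
  also have "(a - f - 1) + 2 * f = a - (1 - f)"
    by (simp add: algebra_simps mult_2)
  finally show ?thesis .
qed

theorem mainTheorem14:
  assumes "CUNC TYPE('a::ring_1)"
  shows "NCUC TYPE('a)"
  unfolding NCUC_def
proof (intro allI impI)
  fix a :: 'a
  assume "nil_clean a"
  then obtain e where e: "e \<in> idempotents" "a - e \<in> nilpotents"
    unfolding nil_clean_def by force
  have decomp: "1 - e \<in> idempotents \<and> a - (1 - e) \<in> units_of_ring"
    using idempotent_one_minus CUNC_nilpotent_shift_unit assms e by blast
  then have "clean a"
    unfolding clean_def by (metis add.commute diff_add_cancel)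
  then obtain g where g: "\<And>h. h \<in> idempotents \<and> a - h \<in> nilpotents \<Longrightarrow> h = g"
    using assms unfolding CUNC_def uniquely_nil_clean_def by blast
  have "f = 1 - g" if "f \<in> idempotents \<and> a - f \<in> units_of_ring" for f
  proof -
    have "g = 1 - f"
      using g that idempotent_one_minus CUNC_unit_shift_nilpotent[OF assms] by blast
    then show ?thesis by simp
  qed
  with decomp show "uniquely_clean a"
    unfolding uniquely_clean_def by blast
qed

end
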